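(* Let $X$ be an almost surely positive random variable with finite mean $\mathbb{E}(X)$ and cumulative distribution function $F$, and let $X_1, X_2$ be two independent copies of $X$. Let $g$ be a positive real-valued integrable function of two positive variables which is symmetric, i.e. $g(u,v)=g(v,u)$ for all $u,v>0$. Let $X^*$ be a random variable independent of $X$ with cumulative distribution function $F_{X^*}(u)=\frac{1}{\mathbb{E}(X)}\int_0^u t\,{\rm d}F(t)$, $u>0$. Then $$\mathbb{E}[|X_1-X_2|\,g(X_1,X_2)] = 2\mathbb{E}(X)\Big\{2\mathbb{E}\big[g(X^*,X)\mathds{1}_{\{X<X^*\}}\big]-\mathbb{E}\big[g(X^*,X)\big]+\mathbb{E}\big[g(X^*,X)\mathds{1}_{\{X=X^*\}}\big]\Big\},$$ where $\mathds{1}_A$ denotes the indicator function of the event $A$. *)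

theory Defs
  imports "HOL-Probability.Probability"
begin

end

theory Submission
  imports Defs
begin

text \<open>
  The law of \<open>X\<^sup>*\<close> is the size-biased law \<open>t / E(X) dF(t)\<close>: the two distribution
  functions agree on \<open>(0, \<infinity>)\<close>, so by right continuity both vanish on \<open>(-\<infinity>, 0]\<close>. With independence,
  \<open>E h(X\<^sup>*, X) = E[X\<^sub>1 h(X\<^sub>1, X\<^sub>2)] / E(X)\<close>, so \<open>E(X)\<close> times the bracket on the
  right is \<open>2A - (A + B + C) + C = A - B\<close>, where \<open>A\<close>, \<open>B\<close>, \<open>C\<close> are the integrals of
  \<open>X\<^sub>1 g(X\<^sub>1, X\<^sub>2)\<close> over \<open>X\<^sub>2 < X\<^sub>1\<close>, \<open>X\<^sub>1 < X\<^sub>2\<close> and \<open>X\<^sub>1 = X\<^sub>2\<close>.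
  On the left, split \<open>|X\<^sub>1 - X\<^sub>2|\<close> by the sign of \<open>X\<^sub>1 - X\<^sub>2\<close>: as \<open>(X\<^sub>1, X\<^sub>2)\<close> and
  \<open>(X\<^sub>2, X\<^sub>1)\<close> have the same law and \<open>g\<close> is symmetric, the two terms carrying the factor
  \<open>X\<^sub>2\<close> integrate to \<open>B\<close> and \<open>A\<close>, giving \<open>2(A - B)\<close> as well.
\<close>

lemma integral_pos_AE:
  fixes f :: "'a \<Rightarrow> real"
  assumes "integrable M f" and "AE x in M. 0 < f x" and "emeasure M (space M) \<noteq> 0"
  shows "0 < integral\<^sup>L M f"
proof -
  have nonneg: "AE x in M. 0 \<le> f x"
    using assms(2) by eventually_elim simp
  have "integral\<^sup>L M f \<noteq> 0"
  proof
    assume "integral\<^sup>L M f = 0"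
    then have "AE x in M. f x = 0"
      using integral_nonneg_eq_0_iff_AE[OF assms(1) nonneg] by simp
    with assms(2) have "AE x in M. False"
      by eventually_elim simp
    with assms(3) show False
      by (metis ae_filter_eq_bot_iff trivial_limit_def)
  qed
  moreover have "0 \<le> integral\<^sup>L M f"
    using nonneg by (rule integral_nonneg_AE)
  ultimately show ?thesis
    by simp
qed

lemma cdf_unique_above:
  assumes M: "real_distribution M" and N: "real_distribution N"
    and eq: "\<forall>u>a. cdf M u = cdf N u" and zero: "cdf N a = 0"
  shows "M = N"
proof -
  interpret M: real_distribution M by (rule M)
  interpret N: real_distribution N by (rule N)
  have "(cdf N \<longlongrightarrow> cdf M a) (at_right a)"
  proof (rule Lim_transform_eventually)
    show "(cdf M \<longlongrightarrow> cdf M a) (at_right a)"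
      using M.cdf_is_right_cont by (simp add: continuous_within)
    show "\<forall>\<^sub>F u in at_right a. cdf M u = cdf N u"
      using eq by (simp add: eventually_at_right_field) (metis gt_ex)
  qed
  moreover have "(cdf N \<longlongrightarrow> cdf N a) (at_right a)"
    using N.cdf_is_right_cont by (simp add: continuous_within)
  ultimately have "cdf M a = 0"
    using zero tendsto_unique[OF trivial_limit_at_right_real] by metis
  then have "cdf M u = cdf N u" if "u \<le> a" for u
    using that zero M.cdf_nondecreasing[OF that] N.cdf_nondecreasing[OF that]
      M.cdf_nonneg[of u] N.cdf_nonneg[of u] by simp
  with eq have "cdf M = cdf N"
    by (metis not_le ext)
  then show ?thesis
    by (rule cdf_unique[OF M N])
qed

definition size_biased :: "real measure \<Rightarrow> real measure" where
  "size_biased \<mu> = density \<mu> (\<lambda>t. ennreal (t / (\<integral>t. t \<partial>\<mu>)))"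

lemma
  assumes \<mu>: "real_distribution \<mu>" and pos: "AE t in \<mu>. 0 < t" and int: "integrable \<mu> (\<lambda>t. t)"
  shows real_distribution_size_biased: "real_distribution (size_biased \<mu>)"
    and cdf_size_biased: "cdf (size_biased \<mu>) u = (LINT t:{0<..u}|\<mu>. t) / (\<integral>t. t \<partial>\<mu>)"
proof -
  interpret real_distribution \<mu> by (rule \<mu>)
  define m where "m = (\<integral>t. t \<partial>\<mu>)"
  have "0 < m"
    unfolding m_def using int pos by (rule integral_pos_AE) (metis emeasure_space_1 zero_neq_one)
  have weight: "AE t in \<mu>. 0 \<le> t / m"
    using pos \<open>0 < m\<close> by (auto elim!: eventually_mono)
  have sets: "sets (size_biased \<mu>) = sets borel"
    by (simp add: size_biased_def)
  have "prob_space (size_biased \<mu>)"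
  proof
    have "emeasure (size_biased \<mu>) (space (size_biased \<mu>)) = (\<integral>\<^sup>+ t. ennreal (t / m) \<partial>\<mu>)"
      unfolding size_biased_def m_def
      by (subst emeasure_density) (auto intro!: nn_integral_cong simp: indicator_def)
    also have "\<dots> = ennreal (\<integral>t. t / m \<partial>\<mu>)"
      using weight int by (intro nn_integral_eq_integral) auto
    also have "\<dots> = 1"
      using \<open>0 < m\<close> by (simp add: m_def)
    finally show "emeasure (size_biased \<mu>) (space (size_biased \<mu>)) = 1" .
  qed
  then show "real_distribution (size_biased \<mu>)"
    using sets by (simp add: real_distribution_def real_distribution_axioms_def)
  have "cdf (size_biased \<mu>) u = (\<integral>t. indicator {..u} t \<partial>size_biased \<mu>)"
    using sets_eq_imp_space_eq[OF sets] by (simp add: cdf_def)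
  also have "\<dots> = (\<integral>t. t / m * indicator {..u} t \<partial>\<mu>)"
    unfolding size_biased_def m_def[symmetric] using weight by (subst integral_density) simp_all
  also have "\<dots> = (\<integral>t. 1 / m * (indicator {0<..u} t *\<^sub>R t) \<partial>\<mu>)"
  proof (rule integral_cong_AE)
    show "AE t in \<mu>. t / m * indicator {..u} t = 1 / m * (indicator {0<..u} t *\<^sub>R t)"
      using pos by eventually_elim (simp add: indicator_def)
  qed simp_all
  finally show "cdf (size_biased \<mu>) u = (LINT t:{0<..u}|\<mu>. t) / (\<integral>t. t \<partial>\<mu>)"
    by (simp add: m_def set_lebesgue_integral_def)
qed

lemma (in prob_space) size_biased_distr_eqI:
  assumes [measurable]: "X \<in> borel_measurable M" "Y \<in> borel_measurable M"
    and pos: "AE \<omega> in M. 0 < X \<omega>" and int: "integrable M X"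
    and cdf_Y: "\<forall>u>0. cdf (distr M borel Y) u = 1 / expectation X * (LINT t:{0<..u}|distr M borel X. t)"
  shows "distr M borel Y = size_biased (distr M borel X)"
proof -
  have \<mu>: "real_distribution (distr M borel X)"
    and pos_\<mu>: "AE t in distr M borel X. 0 < t" and int_\<mu>: "integrable (distr M borel X) (\<lambda>t. t)"
    using pos int by (simp_all add: AE_distr_iff integrable_distr_eq)
  have "(\<integral>t. t \<partial>distr M borel X) = expectation X"
    by (simp add: integral_distr)
  with cdf_Y show ?thesis
    by (intro cdf_unique_above[where a = 0] real_distribution_size_biased[OF \<mu> pos_\<mu> int_\<mu>])
      (simp_all add: cdf_size_biased[OF \<mu> pos_\<mu> int_\<mu>] set_lebesgue_integral_def)
qed

lemma (in pair_sigma_finite) AE_pair_measure_conj: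
  assumes "AE x in M1. P x" and "AE y in M2. Q y"
    and [measurable]: "Measurable.pred M1 P" "Measurable.pred M2 Q"
  shows "AE (x, y) in M1 \<Otimes>\<^sub>M M2. P x \<and> Q y"
proof (rule AE_pair_measure)
  show "AE x in M1. AE y in M2. case (x, y) of (x, y) \<Rightarrow> P x \<and> Q y"
    using assms(1) by eventually_elim (use assms(2) in \<open>auto elim!: eventually_mono\<close>)
qed measurable

lemma pair_measure_density_left:
  assumes "f \<in> borel_measurable M" and "sigma_finite_measure N"
  shows "density M f \<Otimes>\<^sub>M N = density (M \<Otimes>\<^sub>M N) (\<lambda>z. f (fst z))"
  using pair_measure_density[OF assms(1) borel_measurable_const[of 1] assms(2)] assms(2)
  by (simp add: density_1 split_beta')

lemma (in prob_space) distr_size_biased_pair: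
  assumes indep: "indep_var borel Y borel X"
    and law: "distr M borel Y = size_biased (distr M borel X)"
  shows "distr M (borel \<Otimes>\<^sub>M borel) (\<lambda>\<omega>. (Y \<omega>, X \<omega>)) =
    density (distr M borel X \<Otimes>\<^sub>M distr M borel X) (\<lambda>z. ennreal (fst z / expectation X))"
proof -
  have [measurable]: "X \<in> borel_measurable M"
    using indep by (rule indep_var_rv2)
  have "distr M (borel \<Otimes>\<^sub>M borel) (\<lambda>\<omega>. (Y \<omega>, X \<omega>)) = size_biased (distr M borel X) \<Otimes>\<^sub>M distr M borel X"
    using indep law by (simp add: indep_var_distribution_eq)
  also have "\<dots> = density (distr M borel X \<Otimes>\<^sub>M distr M borel X) (\<lambda>z. ennreal (fst z / expectation X))"
    unfolding size_biased_def
    by (subst pair_measure_density_left) (simp_all add: integral_distr prob_space_distr prob_space_imp_sigma_finite)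
  finally show ?thesis .
qed

lemma (in prob_space)
  assumes indep: "indep_var borel Y borel X"
    and law: "distr M borel Y = size_biased (distr M borel X)"
    and pos: "AE \<omega> in M. 0 < X \<omega>" and int: "integrable M X"
    and F[measurable]: "(\<lambda>(x, y). F x y) \<in> borel_measurable (borel \<Otimes>\<^sub>M borel)"
  shows integral_size_biased_pair: "(\<integral>\<omega>. F (Y \<omega>) (X \<omega>) \<partial>M) =
      (\<integral>(x, y). x * F x y \<partial>(distr M borel X \<Otimes>\<^sub>M distr M borel X)) / expectation X"
    and integrable_size_biased_pair: "integrable M (\<lambda>\<omega>. F (Y \<omega>) (X \<omega>)) \<Longrightarrow>
      integrable (distr M borel X \<Otimes>\<^sub>M distr M borel X) (\<lambda>(x, y). x * F x y)"
proof -
  have [measurable]: "X \<in> borel_measurable M" "Y \<in> borel_measurable M"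
    using indep by (rule indep_var_rv2, rule indep_var_rv1)
  define \<mu> where "\<mu> = distr M borel X"
  define m where "m = expectation X"
  have "0 < m"
    unfolding m_def using int pos by (rule integral_pos_AE) (simp add: emeasure_space_1)
  interpret pair_sigma_finite \<mu> \<mu>
    unfolding \<mu>_def by (intro pair_sigma_finite.intro prob_space_imp_sigma_finite prob_space_distr) simp_all
  have pos_\<mu>: "AE x in \<mu>. 0 < x"
    unfolding \<mu>_def using pos by (subst AE_distr_iff) simp_all
  have weight: "AE (x, y) in \<mu> \<Otimes>\<^sub>M \<mu>. 0 \<le> x / m"
    using AE_pair_measure_conj[OF pos_\<mu> pos_\<mu>] \<open>0 < m\<close> by (auto simp: \<mu>_def elim!: eventually_mono)
  have joint: "distr M (borel \<Otimes>\<^sub>M borel) (\<lambda>\<omega>. (Y \<omega>, X \<omega>)) = density (\<mu> \<Otimes>\<^sub>M \<mu>) (\<lambda>z. ennreal (fst z / m))"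
    unfolding \<mu>_def m_def using indep law by (rule distr_size_biased_pair)
  have "(\<integral>\<omega>. F (Y \<omega>) (X \<omega>) \<partial>M) = (\<integral>(x, y). F x y \<partial>density (\<mu> \<Otimes>\<^sub>M \<mu>) (\<lambda>z. ennreal (fst z / m)))"
    unfolding joint[symmetric] by (subst integral_distr) simp_all
  also have "\<dots> = (\<integral>(x, y). x / m * F x y \<partial>(\<mu> \<Otimes>\<^sub>M \<mu>))"
    using weight by (subst integral_density) (simp_all add: \<mu>_def split_beta')
  also have "\<dots> = (\<integral>(x, y). x * F x y \<partial>(\<mu> \<Otimes>\<^sub>M \<mu>)) / m"
    by (simp add: split_beta' field_simps)
  finally show "(\<integral>\<omega>. F (Y \<omega>) (X \<omega>) \<partial>M) =
      (\<integral>(x, y). x * F x y \<partial>(distr M borel X \<Otimes>\<^sub>M distr M borel X)) / expectation X"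
    by (simp add: \<mu>_def m_def)
  assume "integrable M (\<lambda>\<omega>. F (Y \<omega>) (X \<omega>))"
  then have "integrable (density (\<mu> \<Otimes>\<^sub>M \<mu>) (\<lambda>z. ennreal (fst z / m))) (\<lambda>(x, y). F x y)"
    unfolding joint[symmetric] by (subst integrable_distr_eq) simp_all
  then have "integrable (\<mu> \<Otimes>\<^sub>M \<mu>) (\<lambda>(x, y). x * F x y * inverse m)"
    using weight by (subst (asm) integrable_density) (simp_all add: \<mu>_def split_beta' field_simps)
  then show "integrable (distr M borel X \<Otimes>\<^sub>M distr M borel X) (\<lambda>(x, y). x * F x y)"
    using \<open>0 < m\<close> by (simp add: \<mu>_def split_beta')
qed

lemma
  fixes \<mu> :: "'a measure" and g h :: "'a \<Rightarrow> 'a \<Rightarrow> real"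
  assumes \<mu>: "sigma_finite_measure \<mu>"
    and [measurable]: "(\<lambda>(x, y). g x y) \<in> borel_measurable (\<mu> \<Otimes>\<^sub>M \<mu>)"
      "(\<lambda>(x, y). h x y) \<in> borel_measurable (\<mu> \<Otimes>\<^sub>M \<mu>)"
    and sym: "AE (x, y) in \<mu> \<Otimes>\<^sub>M \<mu>. g y x = g x y"
  shows integral_swap_symmetric_kernel:
      "(\<integral>(x, y). h y x * g x y \<partial>(\<mu> \<Otimes>\<^sub>M \<mu>)) = (\<integral>(x, y). h x y * g x y \<partial>(\<mu> \<Otimes>\<^sub>M \<mu>))"
    and integrable_swap_symmetric_kernel:
      "integrable (\<mu> \<Otimes>\<^sub>M \<mu>) (\<lambda>(x, y). h x y * g x y) \<Longrightarrow>
        integrable (\<mu> \<Otimes>\<^sub>M \<mu>) (\<lambda>(x, y). h y x * g x y)"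
proof -
  interpret pair_sigma_finite \<mu> \<mu>
    by (intro pair_sigma_finite.intro \<mu>)
  have sym': "AE (x, y) in \<mu> \<Otimes>\<^sub>M \<mu>. h y x * g y x = h y x * g x y"
    using sym by (auto elim!: eventually_mono)
  have "(\<integral>(x, y). h y x * g x y \<partial>(\<mu> \<Otimes>\<^sub>M \<mu>)) = (\<integral>(x, y). h y x * g y x \<partial>(\<mu> \<Otimes>\<^sub>M \<mu>))"
    using sym' by (intro integral_cong_AE) (auto simp: split_beta')
  also have "\<dots> = (\<integral>(x, y). h x y * g x y \<partial>(\<mu> \<Otimes>\<^sub>M \<mu>))"
    by (rule integral_product_swap[of "\<lambda>(x, y). h x y * g x y", simplified]) measurable
  finally show "(\<integral>(x, y). h y x * g x y \<partial>(\<mu> \<Otimes>\<^sub>M \<mu>)) = (\<integral>(x, y). h x y * g x y \<partial>(\<mu> \<Otimes>\<^sub>M \<mu>))" .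
  assume "integrable (\<mu> \<Otimes>\<^sub>M \<mu>) (\<lambda>(x, y). h x y * g x y)"
  then have "integrable (\<mu> \<Otimes>\<^sub>M \<mu>) (\<lambda>(x, y). h y x * g y x)"
    using integrable_product_swap[of "\<lambda>(x, y). h x y * g x y"] by simp
  then show "integrable (\<mu> \<Otimes>\<^sub>M \<mu>) (\<lambda>(x, y). h y x * g x y)"
  proof (rule integrable_cong_AE_imp)
    show "AE z in \<mu> \<Otimes>\<^sub>M \<mu>. (case z of (x, y) \<Rightarrow> h y x * g y x) = (case z of (x, y) \<Rightarrow> h y x * g x y)"
      using sym' by (simp add: split_beta')
  qed measurable
qed

lemma integral_abs_diff_symmetric_kernel:
  fixes \<mu> :: "real measure" and g :: "real \<Rightarrow> real \<Rightarrow> real"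
  assumes \<mu>: "sigma_finite_measure \<mu>" and sets_\<mu>: "sets \<mu> = sets borel"
    and g: "(\<lambda>(x, y). g x y) \<in> borel_measurable (borel \<Otimes>\<^sub>M borel)"
    and sym: "AE (x, y) in \<mu> \<Otimes>\<^sub>M \<mu>. g y x = g x y"
    and int: "integrable (\<mu> \<Otimes>\<^sub>M \<mu>) (\<lambda>(x, y). x * g x y)"
  shows "(\<integral>(x, y). \<bar>x - y\<bar> * g x y \<partial>(\<mu> \<Otimes>\<^sub>M \<mu>)) =
    2 * (2 * (\<integral>(x, y). x * of_bool (y < x) * g x y \<partial>(\<mu> \<Otimes>\<^sub>M \<mu>))
         - (\<integral>(x, y). x * g x y \<partial>(\<mu> \<Otimes>\<^sub>M \<mu>))
         + (\<integral>(x, y). x * of_bool (y = x) * g x y \<partial>(\<mu> \<Otimes>\<^sub>M \<mu>)))"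
proof -
  have sets[measurable_cong]: "sets (\<mu> \<Otimes>\<^sub>M \<mu>) = sets (borel \<Otimes>\<^sub>M borel)"
    using sets_\<mu> by (intro sets_pair_measure_cong)
  have [measurable]: "(\<lambda>(x, y). g x y) \<in> borel_measurable (\<mu> \<Otimes>\<^sub>M \<mu>)"
    using g by simp
  define A where "A = (\<integral>(x, y). x * of_bool (y < x) * g x y \<partial>(\<mu> \<Otimes>\<^sub>M \<mu>))"
  define B where "B = (\<integral>(x, y). x * of_bool (x < y) * g x y \<partial>(\<mu> \<Otimes>\<^sub>M \<mu>))"
  define C where "C = (\<integral>(x, y). x * of_bool (y = x) * g x y \<partial>(\<mu> \<Otimes>\<^sub>M \<mu>))"
  have int_x: "integrable (\<mu> \<Otimes>\<^sub>M \<mu>) (\<lambda>(x, y). x * of_bool (P x y) * g x y)"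
    if [measurable]: "Measurable.pred (borel \<Otimes>\<^sub>M borel) (\<lambda>(x, y). P x y)" for P
  proof (rule Bochner_Integration.integrable_bound[OF int])
    show "AE z in \<mu> \<Otimes>\<^sub>M \<mu>. norm (case z of (x, y) \<Rightarrow> x * of_bool (P x y) * g x y) \<le> norm (case z of (x, y) \<Rightarrow> x * g x y)"
      by (intro AE_I2) (auto simp: split_beta' abs_mult)
  qed measurable
  have int_y: "integrable (\<mu> \<Otimes>\<^sub>M \<mu>) (\<lambda>(x, y). y * of_bool (P y x) * g x y)"
    if [measurable]: "Measurable.pred (borel \<Otimes>\<^sub>M borel) (\<lambda>(x, y). P x y)" for P
    by (intro integrable_swap_symmetric_kernel[where h = "\<lambda>x y. x * of_bool (P x y)", OF \<mu> _ _ sym, simplified]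
        int_x) measurable
  have swap: "(\<integral>(x, y). y * of_bool (P y x) * g x y \<partial>(\<mu> \<Otimes>\<^sub>M \<mu>)) = (\<integral>(x, y). x * of_bool (P x y) * g x y \<partial>(\<mu> \<Otimes>\<^sub>M \<mu>))"
    if [measurable]: "Measurable.pred (borel \<Otimes>\<^sub>M borel) (\<lambda>(x, y). P x y)" for P
    by (intro integral_swap_symmetric_kernel[where h = "\<lambda>x y. x * of_bool (P x y)", OF \<mu> _ _ sym, simplified])
      measurable
  have "(\<integral>(x, y). \<bar>x - y\<bar> * g x y \<partial>(\<mu> \<Otimes>\<^sub>M \<mu>)) =
      (\<integral>(x, y). (x * of_bool (y < x) * g x y - y * of_bool (y < x) * g x y)
        + (y * of_bool (x < y) * g x y - x * of_bool (x < y) * g x y) \<partial>(\<mu> \<Otimes>\<^sub>M \<mu>))"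
    by (intro Bochner_Integration.integral_cong) (auto simp: algebra_simps)
  also have "\<dots> = (A - B) + (A - B)"
    using int_x[of "\<lambda>x y. y < x"] int_x[of "\<lambda>x y. x < y"] int_y[of "\<lambda>x y. y < x"] int_y[of "\<lambda>x y. x < y"]
      swap[of "\<lambda>x y. y < x"] swap[of "\<lambda>x y. x < y"]
    by (simp add: A_def B_def split_beta')
  finally have lhs: "(\<integral>(x, y). \<bar>x - y\<bar> * g x y \<partial>(\<mu> \<Otimes>\<^sub>M \<mu>)) = 2 * (A - B)"
    by simp
  have "(\<integral>(x, y). x * g x y \<partial>(\<mu> \<Otimes>\<^sub>M \<mu>)) =
      (\<integral>(x, y). x * of_bool (y < x) * g x y + x * of_bool (x < y) * g x y + x * of_bool (y = x) * g x y \<partial>(\<mu> \<Otimes>\<^sub>M \<mu>))"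
    by (intro Bochner_Integration.integral_cong) auto
  also have "\<dots> = A + B + C"
    using int_x[of "\<lambda>x y. y < x"] int_x[of "\<lambda>x y. x < y"] int_x[of "\<lambda>x y. y = x"]
    by (simp add: A_def B_def C_def split_beta')
  finally show ?thesis
    unfolding lhs A_def[symmetric] C_def[symmetric] by simp
qed

theorem proposition1:
  fixes M :: "'a measure"
    and X X1 X2 Xs :: "'a \<Rightarrow> real"
    and g :: "real \<Rightarrow> real \<Rightarrow> real"
  assumes P: "prob_space M"
    and rv: "X \<in> borel_measurable M" "X1 \<in> borel_measurable M"
            "X2 \<in> borel_measurable M" "Xs \<in> borel_measurable M"
    and pos: "AE \<omega> in M. X \<omega> > 0"
    and mean: "integrable M X"
    and copy1: "distr M borel X1 = distr M borel X"
    and copy2: "distr M borel X2 = distr M borel X"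
    and indep12: "prob_space.indep_var M borel X1 borel X2"
    and cdf_Xs: "\<forall>u>0. cdf (distr M borel Xs) u =
                   (1 / (\<integral>\<omega>. X \<omega> \<partial>M)) * (LINT t:{0<..u}|distr M borel X. t)"
    and indepsX: "prob_space.indep_var M borel Xs borel X"
    and g_meas: "(\<lambda>(u, v). g u v) \<in> borel_measurable borel"
    and g_pos: "\<forall>u>0. \<forall>v>0. g u v > 0"
    and g_sym: "\<forall>u>0. \<forall>v>0. g u v = g v u"
    and g_int: "integrable M (\<lambda>\<omega>. g (Xs \<omega>) (X \<omega>))"
  shows "(\<integral>\<omega>. \<bar>X1 \<omega> - X2 \<omega>\<bar> * g (X1 \<omega>) (X2 \<omega>) \<partial>M) =
         2 * (\<integral>\<omega>. X \<omega> \<partial>M) *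
           (2 * (\<integral>\<omega>. g (Xs \<omega>) (X \<omega>) * indicator {\<omega>. X \<omega> < Xs \<omega>} \<omega> \<partial>M)
            - (\<integral>\<omega>. g (Xs \<omega>) (X \<omega>) \<partial>M)
            + (\<integral>\<omega>. g (Xs \<omega>) (X \<omega>) * indicator {\<omega>. X \<omega> = Xs \<omega>} \<omega> \<partial>M))"
proof -
  interpret prob_space M by (rule P)
  note [measurable] = rv
  have g_borel[measurable]: "(\<lambda>(x, y). g x y) \<in> borel_measurable (borel \<Otimes>\<^sub>M borel)"
    using g_meas by (simp add: borel_prod)
  define \<mu> where "\<mu> = distr M borel X"
  have "0 < expectation X"
    using mean pos by (rule integral_pos_AE) (simp add: emeasure_space_1)
  have pos_\<mu>: "AE t in \<mu>. 0 < t"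
    unfolding \<mu>_def using pos by (simp add: AE_distr_iff)
  have law_Xs: "distr M borel Xs = size_biased (distr M borel X)"
    using rv(1,4) pos mean cdf_Xs by (rule size_biased_distr_eqI)
  have law12: "distr M (borel \<Otimes>\<^sub>M borel) (\<lambda>\<omega>. (X1 \<omega>, X2 \<omega>)) = \<mu> \<Otimes>\<^sub>M \<mu>"
    using indep12 copy1 copy2 by (simp add: indep_var_distribution_eq \<mu>_def)
  interpret pair_sigma_finite \<mu> \<mu>
    unfolding \<mu>_def by (intro pair_sigma_finite.intro prob_space_imp_sigma_finite prob_space_distr) simp_all
  have sym: "AE (x, y) in \<mu> \<Otimes>\<^sub>M \<mu>. g y x = g x y"
    using AE_pair_measure_conj[OF pos_\<mu> pos_\<mu>] g_sym by (auto simp: \<mu>_def elim!: eventually_mono)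
  have int: "integrable (\<mu> \<Otimes>\<^sub>M \<mu>) (\<lambda>(x, y). x * g x y)"
    using integrable_size_biased_pair[OF indepsX law_Xs pos mean _ g_int] by (simp add: \<mu>_def)
  have rhs: "(\<integral>\<omega>. g (Xs \<omega>) (X \<omega>) * of_bool (P (Xs \<omega>) (X \<omega>)) \<partial>M) =
      (\<integral>(x, y). x * of_bool (P x y) * g x y \<partial>(\<mu> \<Otimes>\<^sub>M \<mu>)) / expectation X"
    if [measurable]: "Measurable.pred (borel \<Otimes>\<^sub>M borel) (\<lambda>(x, y). P x y)" for P
    using integral_size_biased_pair[OF indepsX law_Xs pos mean, of "\<lambda>x y. g x y * of_bool (P x y)"]
    by (simp add: \<mu>_def mult_ac)
  have "(\<integral>\<omega>. \<bar>X1 \<omega> - X2 \<omega>\<bar> * g (X1 \<omega>) (X2 \<omega>) \<partial>M) = (\<integral>(x, y). \<bar>x - y\<bar> * g x y \<partial>(\<mu> \<Otimes>\<^sub>M \<mu>))"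
    unfolding law12[symmetric] by (subst integral_distr) simp_all
  also have "\<dots> = 2 * (2 * (\<integral>(x, y). x * of_bool (y < x) * g x y \<partial>(\<mu> \<Otimes>\<^sub>M \<mu>))
         - (\<integral>(x, y). x * g x y \<partial>(\<mu> \<Otimes>\<^sub>M \<mu>))
         + (\<integral>(x, y). x * of_bool (y = x) * g x y \<partial>(\<mu> \<Otimes>\<^sub>M \<mu>)))"
    by (intro integral_abs_diff_symmetric_kernel sym int g_borel M1.sigma_finite_measure_axioms)
      (simp add: \<mu>_def)
  finally show ?thesis
    using rhs[of "\<lambda>x y. y < x"] rhs[of "\<lambda>x y. y = x"] rhs[of "\<lambda>_ _. True"] \<open>0 < expectation X\<close>
    by (simp add: indicator_def field_simps)
qed

end
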